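(* Let $\rho^n$ be a periodic grid function on the grid of $(0,1)^3$ with $\rho^n_{i,j,k}>0$ for all $0\le i,j,k\le N_0-1$, and let $\hat\rho^{n+1}$ be any periodic grid function with $\hat\rho^{n+1}_{i,j,k}>0$ for all indices (e.g. the solution of the semi-implicit predictor in the context). Set $\hat\rho^{n+1/2}=\tfrac12(\rho^n+\hat\rho^{n+1})$ and $\mathcal{M}^{n+1/2}_h=\mathcal{A}_h\big(D(\hat\rho^{n+1/2})\hat\rho^{n+1/2}\big)$. Then there exists a unique periodic grid function $\rho^{n+1}$ with $\rho^{n+1}_{i,j,k}>0$ for all indices satisfying $$\frac{\rho^{n+1}-\rho^n}{\Delta t}=\nabla_h\cdot\big(\mathcal{M}^{n+1/2}_h\nabla_h\mu^{n+1/2}\big),\qquad \mu^{n+1/2}=Q(\rho^{n+1},\rho^n)+\Delta t\,(\ln\rho^{n+1}-\ln\rho^n),$$ where all nonlinear functions are applied pointwise.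
   Context: $N_0\ge1$, $h=1/N_0$; grid functions live on $\{(ih,jh,kh):0\le i,j,k\le N_0-1\}$ and are periodic (indices mod $N_0$). $\Delta t>0$, $C\in\mathbb{R}$, $D:(0,\infty)\to(0,\infty)$ is a given (continuous) diffusion coefficient. $F(\rho)=\rho\ln\rho+C\rho$, and $Q(p,q)=\frac{F(p)-F(q)}{p-q}$ for $p\ne q$, $Q(p,p)=F'(p)=\ln p+1+C$. Discrete operators: $(\nabla_h f)$ has components at staggered points, e.g. $(D_xf)_{i+1/2,j,k}=(f_{i+1,j,k}-f_{i,j,k})/h$ and similarly in $y,z$; for a staggered vector field $\mathbf{v}=(v^x,v^y,v^z)$, $(\nabla_h\cdot\mathbf v)_{i,j,k}=(v^x_{i+1/2,j,k}-v^x_{i-1/2,j,k}+v^y_{i,j+1/2,k}-v^y_{i,j-1/2,k}+v^z_{i,j,k+1/2}-v^z_{i,j,k-1/2})/h$; the averaging operator $\mathcal{A}_h$ maps a cell-centered $g$ to staggered values, e.g. $(\mathcal{A}_hg)_{i+1/2,j,k}=\tfrac12(g_{i,j,k}+g_{i+1,j,k})$, and the product $\mathcal{M}\nabla_h\mu$ is taken componentwise at staggered points. A possible predictor is the semi-implicit scheme $\frac{\hat\rho^{n+1}-\rho^n}{\Delta t}=\nabla_h\cdot\big(\mathcal{A}_h[D(\rho^n)]\nabla_h\hat\rho^{n+1}\big)$, whose solution is positive when $\rho^n$ is. *)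

theory Defs
  imports Complex_Main
begin

type_synonym grid = "int \<Rightarrow> int \<Rightarrow> int \<Rightarrow> real"

text \<open>A grid function on the points (ih,jh,kh), h = 1/N0, extended periodically (indices mod N0).\<close>
definition periodic_grid :: "nat \<Rightarrow> grid \<Rightarrow> bool" where
  "periodic_grid N g \<longleftrightarrow>
     (\<forall>i j k. g i j k = g (i mod int N) (j mod int N) (k mod int N))"

definition in_grid :: "nat \<Rightarrow> int \<Rightarrow> int \<Rightarrow> int \<Rightarrow> bool" where
  "in_grid N i j k \<longleftrightarrow> 0 \<le> i \<and> i < int N \<and> 0 \<le> j \<and> j < int N \<and> 0 \<le> k \<and> k < int N"

definition Fen :: "real \<Rightarrow> real \<Rightarrow> real" where
  "Fen C r = r * ln r + C * r"

definition Qdq :: "real \<Rightarrow> real \<Rightarrow> real \<Rightarrow> real" where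
  "Qdq C p q = (if p \<noteq> q then (Fen C p - Fen C q) / (p - q) else ln p + 1 + C)"

text \<open>Staggered difference operators (value at i+1/2 stored at index i), h = 1/N.\<close>
definition Dx :: "nat \<Rightarrow> grid \<Rightarrow> grid" where
  "Dx N f i j k = (f (i+1) j k - f i j k) / (1 / real N)"
definition Dy :: "nat \<Rightarrow> grid \<Rightarrow> grid" where
  "Dy N f i j k = (f i (j+1) k - f i j k) / (1 / real N)"
definition Dz :: "nat \<Rightarrow> grid \<Rightarrow> grid" where
  "Dz N f i j k = (f i j (k+1) - f i j k) / (1 / real N)"

text \<open>Averaging operator A_h (value at i+1/2 stored at index i).\<close>
definition Ax :: "grid \<Rightarrow> grid" where "Ax g i j k = (g i j k + g (i+1) j k) / 2"
definition Ay :: "grid \<Rightarrow> grid" where "Ay g i j k = (g i j k + g i (j+1) k) / 2"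
definition Az :: "grid \<Rightarrow> grid" where "Az g i j k = (g i j k + g i j (k+1)) / 2"

text \<open>Discrete divergence of a staggered field (vx,vy,vz), component at i+1/2 stored at i.\<close>
definition div_h :: "nat \<Rightarrow> grid \<Rightarrow> grid \<Rightarrow> grid \<Rightarrow> grid" where
  "div_h N vx vy vz i j k =
     (vx i j k - vx (i-1) j k + vy i j k - vy i (j-1) k + vz i j k - vz i j (k-1)) / (1 / real N)"

definition div_mob_grad :: "nat \<Rightarrow> grid \<Rightarrow> grid \<Rightarrow> grid" where
  "div_mob_grad N m mu =
     div_h N (\<lambda>i j k. Ax m i j k * Dx N mu i j k)
             (\<lambda>i j k. Ay m i j k * Dy N mu i j k)
             (\<lambda>i j k. Az m i j k * Dz N mu i j k)"

end

theory Submission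
  imports Defs "HOL-Analysis.Analysis"
begin

text \<open>Writing \<open>m\<close> for the mobility at the predicted midpoint, the scheme reads
  \<open>(r - \<rho>)/\<Delta>t = N\<^sup>2 L\<^sub>m \<mu>(r)\<close>, where \<open>L\<^sub>m\<close> is the weighted graph
  Laplacian of the periodic lattice with positive edge weights \<open>\<A>\<^sub>h m\<close>, and where at
  every grid point the chemical potential \<open>\<mu>\<close> is a continuous strictly increasing
  bijection of \<open>(0,\<infinity>)\<close> onto \<open>\<real>\<close>: \<open>Q(\<cdot>,p)\<close> is a chord slope of the convex
  \<open>F\<close>, and \<open>\<Delta>t ln\<close> is increasing and unbounded.
  A discrete maximum principle at the maximum of \<open>\<mu>(r) - \<mu>(s)\<close> shows that subsolutions
  lie below supersolutions, which gives uniqueness. Existence is Perron's method: grids of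
  constant chemical potential provide a subsolution and a supersolution bounding all
  subsolutions, the pointwise supremum of all subsolutions is again a subsolution, and it is
  a solution because raising it at a point where the residual is negative would give a larger
  subsolution.\<close>

lemma Fen_has_real_derivative:
  "x > 0 \<Longrightarrow> (Fen C has_real_derivative (ln x + 1 + C)) (at x)"
  unfolding Fen_def[abs_def] by (auto intro!: derivative_eq_intros)

lemma convex_on_Fen: "convex_on {0<..} (Fen C)"
proof (rule f''_ge0_imp_convex[where f' = "\<lambda>x. ln x + 1 + C" and f'' = "\<lambda>x. 1 / x"])
  fix x :: real assume "x \<in> {0<..}"
  then show "(Fen C has_real_derivative (ln x + 1 + C)) (at x)"
    and "((\<lambda>x. ln x + 1 + C) has_real_derivative (1 / x)) (at x)" and "0 \<le> 1 / x"
    by (auto intro!: derivative_eq_intros Fen_has_real_derivative)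
qed simp

lemma convex_on_chord_slope_mono:
  fixes f :: "real \<Rightarrow> real"
  assumes f: "convex_on I f" and I: "a \<in> I" "b \<in> I" "p \<in> I"
    and "a < b" "a \<noteq> p" "b \<noteq> p"
  shows "(f a - f p) / (a - p) \<le> (f b - f p) / (b - p)"
proof -
  have swap: "(f x - f y) / (x - y) = (f y - f x) / (y - x)" for x y
    by (metis minus_diff_eq minus_divide_divide)
  consider "p < a" | "a < p" "p < b" | "b < p"
    using assms(5-7) by linarith
  then show ?thesis
  proof cases
    case 1
    show ?thesis
      unfolding swap[of a p] swap[of b p] by (rule convex_on_slope_le(1)[OF f I(3,2) 1 \<open>a < b\<close>])
  next
    case 2
    have "(f a - f p) / (a - p) \<le> (f a - f b) / (a - b)"
      by (rule convex_on_slope_le(1)[OF f I(1,2) 2])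
    also have "\<dots> \<le> (f p - f b) / (p - b)"
      by (rule convex_on_slope_le(2)[OF f I(1,2) 2])
    finally show ?thesis
      unfolding swap[of b p] .
  next
    case 3
    show ?thesis
      by (rule convex_on_slope_le(2)[OF f I(1,3) \<open>a < b\<close> 3])
  qed
qed

lemma convex_on_chord_slope_vs_deriv:
  fixes f :: "real \<Rightarrow> real"
  assumes f: "convex_on I f" and "open I" "connected I" "x \<in> I" "p \<in> I"
    and deriv: "(f has_real_derivative f') (at p)"
  shows "x < p \<Longrightarrow> (f x - f p) / (x - p) \<le> f'"
    and "p < x \<Longrightarrow> f' \<le> (f x - f p) / (x - p)"
proof -
  have "f' * (x - p) \<le> f x - f p"
    using assms by (intro convex_on_imp_above_tangent[OF f]) (auto simp: interior_open
        intro: has_field_derivative_at_within)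
  then show "x < p \<Longrightarrow> (f x - f p) / (x - p) \<le> f'"
    and "p < x \<Longrightarrow> f' \<le> (f x - f p) / (x - p)"
    by (simp_all add: divide_le_eq le_divide_eq mult.commute)
qed

lemma Qdq_mono:
  assumes "0 < a" "a \<le> b" "0 < p"
  shows "Qdq C a p \<le> Qdq C b p"
proof -
  note slope = convex_on_chord_slope_vs_deriv[OF convex_on_Fen open_greaterThan
      connected_Ioi _ _ Fen_has_real_derivative]
  consider "a = b" | "a < b" "a \<noteq> p" "b \<noteq> p" | "a = p" "p < b" | "a < p" "b = p"
    using assms(2) by linarith
  then show ?thesis
  proof cases
    case 2
    then show ?thesis using convex_on_chord_slope_mono[OF convex_on_Fen, of a b p] assms
      by (simp add: Qdq_def)
  qed (use assms slope in \<open>simp_all add: Qdq_def\<close>)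
qed

lemma isCont_Qdq:
  assumes "0 < t" "0 < p"
  shows "isCont (\<lambda>x. Qdq C x p) t"
proof (cases "t = p")
  case True
  have "((\<lambda>x. (Fen C x - Fen C p) / (x - p)) \<longlongrightarrow> Qdq C p p) (at p)"
    using Fen_has_real_derivative[OF assms(2)] by (simp add: has_field_derivative_iff Qdq_def)
  then have "((\<lambda>x. Qdq C x p) \<longlongrightarrow> Qdq C p p) (at p)"
    by (rule Lim_transform_eventually) (auto simp: Qdq_def eventually_at_filter)
  then show ?thesis using True by (simp add: isCont_def)
next
  case False
  have "eventually (\<lambda>x. Qdq C x p = (Fen C x - Fen C p) / (x - p)) (nhds t)"
    using t1_space_nhds[OF False] by eventually_elim (simp add: Qdq_def)
  moreover have "isCont (\<lambda>x. (Fen C x - Fen C p) / (x - p)) t"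
    using assms False unfolding Fen_def by (auto intro!: continuous_intros)
  ultimately show ?thesis by (simp add: isCont_cong)
qed

lemma in_grid_mod: "N \<ge> 1 \<Longrightarrow> in_grid N (i mod int N) (j mod int N) (k mod int N)"
  by (simp add: in_grid_def)

lemma periodic_grid_pos:
  "\<lbrakk>N \<ge> 1; periodic_grid N g; \<forall>i j k. in_grid N i j k \<longrightarrow> g i j k > 0\<rbrakk> \<Longrightarrow> g i j k > 0"
  unfolding periodic_grid_def by (metis in_grid_mod)

lemma periodic_grid_map2:
  "\<lbrakk>periodic_grid N g; periodic_grid N h\<rbrakk> \<Longrightarrow> periodic_grid N (\<lambda>a b c. f (g a b c) (h a b c))"
  unfolding periodic_grid_def by metis

lemma periodic_grid_map: "periodic_grid N g \<Longrightarrow> periodic_grid N (\<lambda>a b c. f (g a b c))"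
  using periodic_grid_map2[of N g g "\<lambda>x y. f x"] by simp

lemma periodic_grid_attains_max:
  assumes N: "N \<ge> 1" and g: "periodic_grid N g"
  obtains i j k where "in_grid N i j k" "\<And>a b c. g a b c \<le> g i j k"
proof -
  define P where "P = {0..<int N} \<times> {0..<int N} \<times> {0..<int N}"
  let ?g = "\<lambda>(a, b, c). g a b c"
  have P: "finite P" "P \<noteq> {}"
    using N by (auto simp: P_def)
  obtain q where q: "q \<in> P" "Max (?g ` P) = ?g q"
    using obtains_MAX[OF P] .
  have "g a b c \<le> ?g q" for a b c
  proof -
    have "(a mod int N, b mod int N, c mod int N) \<in> P"
      using N by (simp add: P_def)
    then have "g (a mod int N) (b mod int N) (c mod int N) \<le> Max (?g ` P)"
      using P by (intro Max_ge) force+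
    then show ?thesis
      using g q(2) by (simp add: periodic_grid_def)
  qed
  then show ?thesis
    using that q(1) by (auto simp: P_def in_grid_def)
qed

definition lattice_lap :: "grid \<Rightarrow> grid \<Rightarrow> grid" where
  "lattice_lap m u i j k =
       Ax m i j k * (u (i+1) j k - u i j k) + Ax m (i-1) j k * (u (i-1) j k - u i j k)
     + Ay m i j k * (u i (j+1) k - u i j k) + Ay m i (j-1) k * (u i (j-1) k - u i j k)
     + Az m i j k * (u i j (k+1) - u i j k) + Az m i j (k-1) * (u i j (k-1) - u i j k)"

definition lattice_deg :: "grid \<Rightarrow> grid" where
  "lattice_deg m i j k =
     Ax m i j k + Ax m (i-1) j k + Ay m i j k + Ay m i (j-1) k + Az m i j k + Az m i j (k-1)"

lemma div_mob_grad_eq_lattice_lap: "div_mob_grad N m u i j k = (real N)\<^sup>2 * lattice_lap m u i j k"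
  unfolding div_mob_grad_def div_h_def lattice_lap_def Dx_def Dy_def Dz_def
  by (simp add: field_simps power2_eq_square)

lemma lattice_lap_diff:
  "lattice_lap m u i j k - lattice_lap m v i j k = lattice_lap m (\<lambda>a b c. u a b c - v a b c) i j k"
  unfolding lattice_lap_def by (simp add: algebra_simps)

lemma lattice_lap_const: "lattice_lap m (\<lambda>a b c. z) i j k = 0"
  unfolding lattice_lap_def by simp

lemma Axyz_pos:
  assumes "\<And>a b c. m a b c > 0"
  shows "Ax m i j k > 0" "Ay m i j k > 0" "Az m i j k > 0"
  unfolding Ax_def Ay_def Az_def using assms by (simp_all add: add_pos_pos)

lemma lattice_deg_nonneg: "(\<And>a b c. m a b c > 0) \<Longrightarrow> lattice_deg m i j k \<ge> 0"
  unfolding lattice_deg_def by (intro add_nonneg_nonneg less_imp_le Axyz_pos)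

lemma lattice_lap_nonpos_at_max:
  assumes m: "\<And>a b c. m a b c > 0" and max: "\<And>a b c. u a b c \<le> u i j k"
  shows "lattice_lap m u i j k \<le> 0"
proof -
  have flux_nonpos: "w * (u a b c - u i j k) \<le> 0" if "w > 0" for w :: real and a b c
    using that max[of a b c] by (simp add: mult_nonneg_nonpos)
  show ?thesis
    unfolding lattice_lap_def by (intro add_nonpos_nonpos flux_nonpos Axyz_pos[OF m])
qed

lemma lattice_lap_ge_neg_deg:
  assumes m: "\<And>a b c. m a b c > 0" and nonneg: "\<And>a b c. u a b c \<ge> 0"
  shows "lattice_lap m u i j k \<ge> - lattice_deg m i j k * u i j k"
proof -
  have "lattice_lap m u i j k + lattice_deg m i j k * u i j k =
          Ax m i j k * u (i+1) j k + Ax m (i-1) j k * u (i-1) j k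
        + Ay m i j k * u i (j+1) k + Ay m i (j-1) k * u i (j-1) k
        + Az m i j k * u i j (k+1) + Az m i j (k-1) * u i j (k-1)"
    unfolding lattice_lap_def lattice_deg_def by (simp add: algebra_simps)
  also have "\<dots> \<ge> 0"
    by (intro add_nonneg_nonneg mult_nonneg_nonneg nonneg less_imp_le Axyz_pos[OF m])
  finally show ?thesis by simp
qed

locale implicit_step =
  fixes N :: nat and dt C :: real and m rho :: grid
  assumes N: "N \<ge> 1" and dt: "dt > 0" and m_pos: "\<And>a b c. m a b c > 0"
    and rho_periodic: "periodic_grid N rho" and rho_pos: "\<And>a b c. rho a b c > 0"
begin

definition pot :: "real \<Rightarrow> real \<Rightarrow> real" where
  "pot p t = Qdq C t p + dt * (ln t - ln p)"

definition chem_pot :: "grid \<Rightarrow> grid" where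
  "chem_pot r a b c = pot (rho a b c) (r a b c)"

definition resid :: "grid \<Rightarrow> grid" where
  "resid r i j k = (r i j k - rho i j k) / dt - (real N)\<^sup>2 * lattice_lap m (chem_pot r) i j k"

lemma pot_mono: "\<lbrakk>0 < a; a \<le> b; 0 < p\<rbrakk> \<Longrightarrow> pot p a \<le> pot p b"
  unfolding pot_def using Qdq_mono[of a b p C] dt
  by (smt (verit) ln_le_cancel_iff mult_left_mono)

lemma pot_strict_mono: "\<lbrakk>0 < a; a < b; 0 < p\<rbrakk> \<Longrightarrow> pot p a < pot p b"
  unfolding pot_def using Qdq_mono[of a b p C] dt
  by (smt (verit) ln_less_cancel_iff mult_strict_left_mono)

lemma pot_le_iff: "\<lbrakk>0 < a; 0 < b; 0 < p\<rbrakk> \<Longrightarrow> pot p a \<le> pot p b \<longleftrightarrow> a \<le> b"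
  by (meson not_le pot_mono pot_strict_mono)

lemma pot_self: "pot p p = ln p + 1 + C"
  by (simp add: pot_def Qdq_def)

lemma isCont_pot: "\<lbrakk>0 < t; 0 < p\<rbrakk> \<Longrightarrow> isCont (pot p) t"
  unfolding pot_def[abs_def] using isCont_Qdq by (auto intro!: continuous_intros)

lemma pot_surj:
  assumes p: "0 < p"
  shows "\<exists>t>0. pot p t = z"
proof -
  define L where "L = (z - pot p p) / dt + ln p"
  define lo where "lo = min p (exp L)"
  define hi where "hi = max p (exp L)"
  have lo: "0 < lo" "lo \<le> p" "ln lo \<le> L" and hi: "lo \<le> hi" "p \<le> hi" "L \<le> ln hi"
    using p by (auto simp: lo_def hi_def min_def max_def ln_le_cancel_iff[symmetric]
        simp del: ln_le_cancel_iff)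
  have "pot p lo \<le> pot p p + dt * (ln lo - ln p)"
    using Qdq_mono[OF lo(1,2) p, of C] by (simp add: pot_def)
  also have "\<dots> \<le> z"
    using dt lo(3) by (simp add: L_def field_simps)
  finally have "pot p lo \<le> z" .
  moreover have "z \<le> pot p p + dt * (ln hi - ln p)"
    using dt hi(3) by (simp add: L_def field_simps)
  then have "z \<le> pot p hi"
    using Qdq_mono[OF p hi(2) p, of C] by (simp add: pot_def)
  ultimately obtain t where "lo \<le> t" "t \<le> hi" "pot p t = z"
    using IVT[of "pot p" lo z hi] hi(1) isCont_pot lo(1) p by force
  then show ?thesis
    using lo(1) by (intro exI[of _ t]) auto
qed

lemma chem_pot_periodic: "periodic_grid N r \<Longrightarrow> periodic_grid N (chem_pot r)"
  unfolding chem_pot_def[abs_def] by (rule periodic_grid_map2[OF rho_periodic])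

lemma chem_pot_mono:
  "\<lbrakk>0 < r a b c; r a b c \<le> r' a b c\<rbrakk> \<Longrightarrow> chem_pot r a b c \<le> chem_pot r' a b c"
  unfolding chem_pot_def using pot_mono rho_pos by blast

lemma resid_increment:
  assumes pos: "\<And>a b c. r a b c > 0" and le: "\<And>a b c. r a b c \<le> r' a b c"
  shows "resid r' i j k \<le> resid r i j k + (r' i j k - r i j k) / dt
           + (real N)\<^sup>2 * lattice_deg m i j k * (chem_pot r' i j k - chem_pot r i j k)"
proof -
  let ?d = "\<lambda>a b c. chem_pot r' a b c - chem_pot r a b c"
  have "lattice_lap m (chem_pot r') i j k - lattice_lap m (chem_pot r) i j k
          = lattice_lap m ?d i j k"
    by (rule lattice_lap_diff)
  also have "\<dots> \<ge> - lattice_deg m i j k * ?d i j k"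
    using chem_pot_mono pos le by (intro lattice_lap_ge_neg_deg m_pos) (simp add: less_imp_le)
  finally have "(real N)\<^sup>2 * (lattice_lap m (chem_pot r) i j k - lattice_deg m i j k * ?d i j k)
      \<le> (real N)\<^sup>2 * lattice_lap m (chem_pot r') i j k"
    by (intro mult_left_mono) auto
  then show ?thesis
    unfolding resid_def by (simp add: algebra_simps diff_divide_distrib)
qed

text \<open>Both steps of Perron's method rest on this local upper semicontinuity of the residual.\<close>
lemma resid_increment_small:
  assumes x: "x > 0" and eta: "eta > 0"
  obtains d where "d > 0"
    "\<And>r r'. \<lbrakk>\<And>a b c. r a b c > 0; \<And>a b c. r a b c \<le> r' a b c;
              x - d < r i j k; r' i j k < x + d\<rbrakk>
       \<Longrightarrow> resid r' i j k < resid r i j k + eta"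
proof -
  define K where "K = (real N)\<^sup>2 * lattice_deg m i j k"
  have K: "K \<ge> 0"
    unfolding K_def using lattice_deg_nonneg[OF m_pos] by simp
  define e where "e = eta / (4 * (K + 1))"
  have e: "e > 0" "K * (2 * e) < eta / 2"
    using K eta by (auto simp: e_def field_simps)
  obtain d0 where d0: "d0 > 0"
    "\<And>t. \<bar>t - x\<bar> < d0 \<Longrightarrow> \<bar>pot (rho i j k) t - pot (rho i j k) x\<bar> < e"
    using isCont_pot[OF x rho_pos[of i j k]] e(1) unfolding continuous_at_eps_delta dist_real_def
    by blast
  define d where "d = min d0 (eta * dt / 4)"
  show thesis
  proof (rule that)
    show "d > 0"
      using d0(1) eta dt by (simp add: d_def)
    fix r r' assume pos: "\<And>a b c. r a b c > 0" and le: "\<And>a b c. r a b c \<le> r' a b c"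
      and close: "x - d < r i j k" "r' i j k < x + d"
    have "(r' i j k - r i j k) / dt < eta / 2"
      using close dt by (simp add: d_def divide_less_eq)
    moreover have "\<bar>r i j k - x\<bar> < d0" "\<bar>r' i j k - x\<bar> < d0"
      using close le[of i j k] by (auto simp: d_def)
    then have "chem_pot r' i j k - chem_pot r i j k < 2 * e"
      using d0(2)[of "r i j k"] d0(2)[of "r' i j k"] by (simp add: chem_pot_def abs_less_iff)
    then have "K * (chem_pot r' i j k - chem_pot r i j k) < eta / 2"
      using K e(2) by (smt (verit) mult_left_mono)
    ultimately show "resid r' i j k < resid r i j k + eta"
      using resid_increment[where r=r and r'=r' and i=i and j=j and k=k, OF pos le]
      unfolding K_def by linarith
  qed
qed

lemma subsolution_le_supersolution:
  assumes r: "periodic_grid N r" "\<And>a b c. r a b c > 0"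
    and s: "periodic_grid N s" "\<And>a b c. s a b c > 0"
    and sub: "\<And>i j k. in_grid N i j k \<Longrightarrow> resid r i j k \<le> 0"
    and super: "\<And>i j k. in_grid N i j k \<Longrightarrow> resid s i j k \<ge> 0"
  shows "r i j k \<le> s i j k"
proof (rule ccontr)
  assume "\<not> r i j k \<le> s i j k"
  let ?d = "\<lambda>a b c. chem_pot r a b c - chem_pot s a b c"
  have "periodic_grid N ?d"
    using chem_pot_periodic[OF r(1)] chem_pot_periodic[OF s(1)] by (rule periodic_grid_map2)
  then obtain i0 j0 k0 where g0: "in_grid N i0 j0 k0" and max: "\<And>a b c. ?d a b c \<le> ?d i0 j0 k0"
    using periodic_grid_attains_max[OF N] by blast
  have "0 < ?d i j k"
    using pot_strict_mono[OF s(2)[of i j k] _ rho_pos[of i j k]] \<open>\<not> r i j k \<le> s i j k\<close>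
    by (simp add: chem_pot_def)
  then have "s i0 j0 k0 < r i0 j0 k0"
    using max[of i j k] pot_mono[OF r(2)[of i0 j0 k0] _ rho_pos[of i0 j0 k0]] unfolding chem_pot_def
    by (smt (verit))
  then have "(s i0 j0 k0 - rho i0 j0 k0) / dt < (r i0 j0 k0 - rho i0 j0 k0) / dt"
    using dt by (simp add: divide_strict_right_mono)
  moreover have "lattice_lap m ?d i0 j0 k0 \<le> 0"
    using max by (rule lattice_lap_nonpos_at_max[OF m_pos])
  then have "(real N)\<^sup>2 * lattice_lap m (chem_pot r) i0 j0 k0
      \<le> (real N)\<^sup>2 * lattice_lap m (chem_pot s) i0 j0 k0"
    using lattice_lap_diff[of m "chem_pot r" i0 j0 k0 "chem_pot s"] by (intro mult_left_mono) auto
  ultimately have "resid s i0 j0 k0 < resid r i0 j0 k0"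
    unfolding resid_def by simp
  then show False
    using sub[OF g0] super[OF g0] by simp
qed

text \<open>The grid on which the chemical potential is the constant \<open>z\<close>; it is a subsolution or a
  supersolution according as \<open>z\<close> lies below or above \<open>F'(\<rho>) = ln \<rho> + 1 + C\<close> everywhere.\<close>
definition level_grid :: "real \<Rightarrow> grid" where
  "level_grid z i j k = (SOME t. t > 0 \<and> pot (rho i j k) t = z)"

lemma level_grid_pos: "level_grid z i j k > 0"
  and pot_level_grid: "pot (rho i j k) (level_grid z i j k) = z"
  using someI_ex[OF pot_surj[OF rho_pos[of i j k], of z]] by (simp_all add: level_grid_def)

lemma level_grid_periodic: "periodic_grid N (level_grid z)"
  unfolding level_grid_def[abs_def] by (rule periodic_grid_map[OF rho_periodic])

lemma resid_level_grid: "resid (level_grid z) i j k = (level_grid z i j k - rho i j k) / dt"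
proof -
  have "chem_pot (level_grid z) = (\<lambda>a b c. z)"
    by (simp add: chem_pot_def pot_level_grid fun_eq_iff)
  then show ?thesis
    by (simp add: resid_def lattice_lap_const)
qed

lemma level_grid_le_rho_iff: "level_grid z i j k \<le> rho i j k \<longleftrightarrow> z \<le> ln (rho i j k) + 1 + C"
proof -
  have "pot (rho i j k) (level_grid z i j k) \<le> pot (rho i j k) (rho i j k)
          \<longleftrightarrow> level_grid z i j k \<le> rho i j k"
    by (rule pot_le_iff[OF level_grid_pos rho_pos rho_pos])
  then show ?thesis
    by (simp add: pot_level_grid pot_self)
qed

lemma rho_le_level_grid_iff: "rho i j k \<le> level_grid z i j k \<longleftrightarrow> ln (rho i j k) + 1 + C \<le> z"
proof -
  have "pot (rho i j k) (rho i j k) \<le> pot (rho i j k) (level_grid z i j k)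
          \<longleftrightarrow> rho i j k \<le> level_grid z i j k"
    by (rule pot_le_iff[OF rho_pos level_grid_pos rho_pos])
  then show ?thesis
    by (simp add: pot_level_grid pot_self)
qed

definition subsolutions :: "grid set" where
  "subsolutions = {r. periodic_grid N r \<and> (\<forall>a b c. r a b c > 0)
                      \<and> (\<forall>i j k. in_grid N i j k \<longrightarrow> resid r i j k \<le> 0)}"

lemma ln_rho_bounded:
  obtains lo hi where "\<And>a b c. lo \<le> ln (rho a b c)" "\<And>a b c. ln (rho a b c) \<le> hi"
proof -
  have per: "periodic_grid N (\<lambda>a b c. f (rho a b c))" for f :: "real \<Rightarrow> real"
    by (rule periodic_grid_map[OF rho_periodic])
  obtain i j k where "in_grid N i j k" and max: "\<And>a b c. ln (rho a b c) \<le> ln (rho i j k)"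
    using periodic_grid_attains_max[OF N per[of ln]] by auto
  obtain i' j' k' where "in_grid N i' j' k'"
    and min: "\<And>a b c. - ln (rho a b c) \<le> - ln (rho i' j' k')"
    using periodic_grid_attains_max[OF N per[of "\<lambda>x. - ln x"]] by auto
  show thesis
  proof (rule that)
    show "ln (rho i' j' k') \<le> ln (rho a b c)" for a b c
      using min[of a b c] by linarith
  qed (rule max)
qed

lemma level_grid_subsolution:
  assumes "\<And>a b c. z \<le> ln (rho a b c) + 1 + C"
  shows "level_grid z \<in> subsolutions"
proof -
  have "resid (level_grid z) i j k \<le> 0" for i j k
    using assms level_grid_le_rho_iff dt by (simp add: resid_level_grid divide_nonpos_pos)
  then show ?thesis
    using level_grid_pos level_grid_periodic by (simp add: subsolutions_def)
qed

lemma subsolution_le_level_grid: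
  assumes "\<And>a b c. ln (rho a b c) + 1 + C \<le> z" and "r \<in> subsolutions"
  shows "r a b c \<le> level_grid z a b c"
proof -
  have r: "periodic_grid N r" "\<And>a b c. r a b c > 0"
    "\<And>i j k. in_grid N i j k \<Longrightarrow> resid r i j k \<le> 0"
    using assms(2) by (simp_all add: subsolutions_def)
  have "resid (level_grid z) i j k \<ge> 0" for i j k
    using assms(1) rho_le_level_grid_iff dt by (simp add: resid_level_grid)
  then show ?thesis
    using subsolution_le_supersolution[where r=r and s="level_grid z",
        OF r(1,2) level_grid_periodic level_grid_pos r(3)]
    by blast
qed

lemma subsolutions_nonempty: "subsolutions \<noteq> {}"
proof -
  obtain lo where "\<And>a b c. lo \<le> ln (rho a b c)"
    using ln_rho_bounded by metis
  then have "level_grid (lo + 1 + C) \<in> subsolutions"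
    by (intro level_grid_subsolution) simp
  then show ?thesis
    by blast
qed

lemma subsolutions_bdd_above: "bdd_above ((\<lambda>r. r a b c) ` subsolutions)"
proof -
  obtain hi where "\<And>a b c. ln (rho a b c) \<le> hi"
    using ln_rho_bounded by metis
  then have "r a b c \<le> level_grid (hi + 1 + C) a b c" if "r \<in> subsolutions" for r
    using that by (intro subsolution_le_level_grid) simp_all
  then show ?thesis
    by (intro bdd_aboveI[of _ "level_grid (hi + 1 + C) a b c"]) blast
qed

definition perron :: grid where
  "perron a b c = Sup ((\<lambda>r. r a b c) ` subsolutions)"

lemma le_perron: "r \<in> subsolutions \<Longrightarrow> r a b c \<le> perron a b c"
  unfolding perron_def using subsolutions_bdd_above by (intro cSup_upper) auto

lemma perron_pos: "perron a b c > 0"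
proof -
  obtain r where r: "r \<in> subsolutions"
    using subsolutions_nonempty by blast
  then have "r a b c > 0"
    by (simp add: subsolutions_def)
  then show ?thesis
    using le_perron[OF r, of a b c] by linarith
qed

lemma perron_periodic: "periodic_grid N perron"
proof -
  have rep: "r a b c = r (a mod int N) (b mod int N) (c mod int N)" if "r \<in> subsolutions" for r a b c
    using that unfolding subsolutions_def periodic_grid_def by blast
  have "(\<lambda>r. r a b c) ` subsolutions
        = (\<lambda>r. r (a mod int N) (b mod int N) (c mod int N)) ` subsolutions" for a b c
    by (rule image_cong[OF refl rep])
  then show ?thesis
    unfolding periodic_grid_def perron_def by (intro allI arg_cong[where f = Sup])
qed

lemma perron_subsolution: "in_grid N i j k \<Longrightarrow> resid perron i j k \<le> 0"
proof (rule ccontr)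
  assume g: "in_grid N i j k" and "\<not> resid perron i j k \<le> 0"
  then have eta: "resid perron i j k > 0" by simp
  obtain d where d: "d > 0" and small:
    "\<And>r r'. \<lbrakk>\<And>a b c. r a b c > 0; \<And>a b c. r a b c \<le> r' a b c;
              perron i j k - d < r i j k; r' i j k < perron i j k + d\<rbrakk>
       \<Longrightarrow> resid r' i j k < resid r i j k + resid perron i j k"
    using resid_increment_small[OF perron_pos[of i j k] eta] by blast
  have "perron i j k - d < Sup ((\<lambda>r. r i j k) ` subsolutions)"
    using d by (simp add: perron_def)
  then obtain r where r: "r \<in> subsolutions" "perron i j k - d < r i j k"
    by (rule less_cSupE) (use subsolutions_nonempty in auto)
  have "resid perron i j k < resid r i j k + resid perron i j k"
    using r le_perron d by (intro small) (auto simp: subsolutions_def)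
  moreover have "resid r i j k \<le> 0"
    using r(1) g by (simp add: subsolutions_def)
  ultimately show False by simp
qed

lemma perron_solution: "in_grid N i j k \<Longrightarrow> resid perron i j k = 0"
proof (rule ccontr)
  assume g: "in_grid N i j k" and "resid perron i j k \<noteq> 0"
  then have eta: "- resid perron i j k > 0"
    using perron_subsolution[OF g] by simp
  obtain d where d: "d > 0" and small:
    "\<And>r r'. \<lbrakk>\<And>a b c. r a b c > 0; \<And>a b c. r a b c \<le> r' a b c;
              perron i j k - d < r i j k; r' i j k < perron i j k + d\<rbrakk>
       \<Longrightarrow> resid r' i j k < resid r i j k - resid perron i j k"
    using resid_increment_small[OF perron_pos[of i j k] eta] by (metis diff_conv_add_uminus)
  define bump where
    "bump a b c = (if (a mod int N, b mod int N, c mod int N) = (i, j, k) then d / 2 else 0)" for a b c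
  define bumped where "bumped a b c = perron a b c + bump a b c" for a b c
  have le: "perron a b c \<le> bumped a b c" for a b c
    using d by (simp add: bumped_def bump_def)
  have bumped_at: "bumped i j k = perron i j k + d / 2"
    using g by (simp add: bumped_def bump_def in_grid_def)
  have "resid bumped a b c \<le> 0" if ga: "in_grid N a b c" for a b c
  proof (cases "a = i \<and> b = j \<and> c = k")
    case True
    then show ?thesis
      using small[where r=perron and r'=bumped, OF perron_pos le] bumped_at d by simp
  next
    case False
    then have "bumped a b c = perron a b c"
      using ga by (auto simp: bumped_def bump_def in_grid_def)
    then show ?thesis
      using resid_increment[where r=perron and r'=bumped and i=a and j=b and k=c, OF perron_pos le]
        perron_subsolution[OF ga]
      by (simp add: chem_pot_def)
  qed
  moreover have "periodic_grid N bumped"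
    unfolding bumped_def[abs_def]
    by (rule periodic_grid_map2[OF perron_periodic]) (simp add: periodic_grid_def bump_def)
  moreover have "bumped a b c > 0" for a b c
    using le[of a b c] perron_pos[of a b c] by simp
  ultimately have "bumped \<in> subsolutions"
    by (simp add: subsolutions_def)
  then show False
    using le_perron[of bumped i j k] bumped_at d by simp
qed

lemma unique_solution:
  "\<exists>!r. periodic_grid N r \<and> (\<forall>i j k. in_grid N i j k \<longrightarrow> r i j k > 0)
        \<and> (\<forall>i j k. in_grid N i j k \<longrightarrow> resid r i j k = 0)"
proof (rule ex1I[of _ perron])
  show "periodic_grid N perron \<and> (\<forall>i j k. in_grid N i j k \<longrightarrow> perron i j k > 0)
        \<and> (\<forall>i j k. in_grid N i j k \<longrightarrow> resid perron i j k = 0)"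
    using perron_periodic perron_pos perron_solution by blast
next
  fix r assume "periodic_grid N r \<and> (\<forall>i j k. in_grid N i j k \<longrightarrow> r i j k > 0)
        \<and> (\<forall>i j k. in_grid N i j k \<longrightarrow> resid r i j k = 0)"
  then have r: "periodic_grid N r" "\<And>a b c. r a b c > 0"
    and solution: "\<And>i j k. in_grid N i j k \<Longrightarrow> resid r i j k = 0"
    using periodic_grid_pos[OF N] by blast+
  have "r a b c \<le> perron a b c" "perron a b c \<le> r a b c" for a b c
    using subsolution_le_supersolution[where r=r and s=perron, OF r perron_periodic perron_pos]
      subsolution_le_supersolution[where r=perron and s=r, OF perron_periodic perron_pos r]
    by (simp_all add: solution perron_solution)
  then show "r = perron"
    by (intro ext order_antisym)
qed

end

theorem theorem3p5:
  fixes N0 :: nat and dt C :: real and D :: "real \<Rightarrow> real" and rho rhohat :: grid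
  assumes "N0 \<ge> 1" and "dt > 0"
    and "continuous_on {0<..} D" and "\<forall>x>0. D x > 0"
    and "periodic_grid N0 rho" and "\<forall>i j k. in_grid N0 i j k \<longrightarrow> rho i j k > 0"
    and "periodic_grid N0 rhohat" and "\<forall>i j k. in_grid N0 i j k \<longrightarrow> rhohat i j k > 0"
  shows "\<exists>!r :: grid. periodic_grid N0 r
           \<and> (\<forall>i j k. in_grid N0 i j k \<longrightarrow> r i j k > 0)
           \<and> (\<forall>i j k. in_grid N0 i j k \<longrightarrow>
                 (r i j k - rho i j k) / dt =
                 div_mob_grad N0
                   (\<lambda>a b c. D ((rho a b c + rhohat a b c) / 2) * ((rho a b c + rhohat a b c) / 2))
                   (\<lambda>a b c. Qdq C (r a b c) (rho a b c) + dt * (ln (r a b c) - ln (rho a b c)))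
                   i j k)"
proof -
  let ?m = "\<lambda>a b c. D ((rho a b c + rhohat a b c) / 2) * ((rho a b c + rhohat a b c) / 2)"
  have rho_pos: "\<And>a b c. rho a b c > 0" and rhohat_pos: "\<And>a b c. rhohat a b c > 0"
    using periodic_grid_pos assms(1,5-8) by blast+
  have "(rho a b c + rhohat a b c) / 2 > 0" for a b c
    using rho_pos[of a b c] rhohat_pos[of a b c] by simp
  then have "?m a b c > 0" for a b c
    using assms(4) by simp
  then interpret implicit_step N0 dt C ?m rho
    using assms(1,2,5) rho_pos by unfold_locales
  have resid_eq_0_iff: "resid r i j k = 0 \<longleftrightarrow> (r i j k - rho i j k) / dt =
      div_mob_grad N0 ?m
        (\<lambda>a b c. Qdq C (r a b c) (rho a b c) + dt * (ln (r a b c) - ln (rho a b c))) i j k"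
    for r i j k
    unfolding resid_def div_mob_grad_eq_lattice_lap chem_pot_def[abs_def] pot_def by simp
  show ?thesis
    using unique_solution unfolding resid_eq_0_iff .
qed

end
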